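(* Consider the delay differential system \[ \begin{aligned} \dot T(t)&= s-dT(t)+aT(t)\Big(1-\frac{T(t)+I(t)}{T_{\max}}\Big)-\frac{bT(t)V(t)}{1+\alpha V(t)},\\ \dot I(t)&= \frac{bT(t-\tau)V(t-\tau)}{1+\alpha V(t-\tau)}+aI(t)\Big(1-\frac{T(t)+I(t)}{T_{\max}}\Big)-\mu I(t),\\ \dot V(t)&= pI(t)-cV(t), \end{aligned} \] with positive constants $s,d,a,T_{\max},b,\alpha,\mu,p,c$ satisfying $d\le\mu$, and $\tau\ge0$. Then there exist $M_I,M_V>0$ such that every positive solution $(T(t),I(t),V(t))$ satisfies $I(t)<M_I$ and $V(t)<M_V$ for all sufficiently large $t$.
   Context: A positive solution is one with $T,I,V>0$. *)

theory Defs
  imports "HOL-Analysis.Analysis"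
begin

definition positive_solution ::
  "real \<Rightarrow> real \<Rightarrow> real \<Rightarrow> real \<Rightarrow> real \<Rightarrow> real \<Rightarrow> real \<Rightarrow> real \<Rightarrow> real \<Rightarrow> real \<Rightarrow>
   (real \<Rightarrow> real) \<Rightarrow> (real \<Rightarrow> real) \<Rightarrow> (real \<Rightarrow> real) \<Rightarrow> bool" where
  "positive_solution s d a Tmax b \<alpha> \<mu> p c \<tau> T I V \<longleftrightarrow>
     continuous_on {-\<tau>..} T \<and> continuous_on {-\<tau>..} I \<and> continuous_on {-\<tau>..} V \<and>
     (\<forall>t\<ge>-\<tau>. T t > 0 \<and> I t > 0 \<and> V t > 0) \<and>
     (\<forall>t>0.
        (T has_real_derivative
           (s - d * T t + a * T t * (1 - (T t + I t) / Tmax) - b * T t * V t / (1 + \<alpha> * V t))) (at t) \<and>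
        (I has_real_derivative
           (b * T (t - \<tau>) * V (t - \<tau>) / (1 + \<alpha> * V (t - \<tau>))
            + a * I t * (1 - (T t + I t) / Tmax) - \<mu> * I t)) (at t) \<and>
        (V has_real_derivative (p * I t - c * V t)) (at t))"

end

theory Submission
  imports Defs "HOL-Real_Asymp.Real_Asymp"
begin

text \<open>The delayed total population \<open>W t = T (t - \<tau>) + I t\<close> sees the infection term leave
  \<open>T\<close> at time \<open>t - \<tau>\<close> and enter \<open>I\<close> at time \<open>t\<close>, so it cancels in \<open>W'\<close>. Each logistic term
  is at most \<open>a Tmax / 4\<close>, and \<open>d \<le> \<mu>\<close> gives \<open>W' \<le> K - d W\<close> with \<open>K = s + a Tmax / 2\<close>. Since
  \<open>exp (d t) (W t - K / d)\<close> is then nonincreasing, \<open>W\<close>, and hence \<open>I\<close>, is eventually below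
  \<open>K / d + 1\<close> with a bound independent of the solution. Feeding this into \<open>V' = p I - c V\<close>
  bounds \<open>V\<close> in the same way.\<close>

lemma logistic_growth_le:
  fixes a Tm x y :: real
  assumes "a \<ge> 0" "Tm > 0" "x \<ge> 0" "y \<ge> 0"
  shows "a * x * (1 - (x + y) / Tm) \<le> a * Tm / 4"
proof -
  have "x * (1 - (x + y) / Tm) \<le> x * (1 - x / Tm)"
    using assms by (intro mult_left_mono) (auto simp: divide_right_mono)
  also have "\<dots> = (Tm * x - x\<^sup>2) / Tm"
    using assms by (simp add: field_simps power2_eq_square)
  also have "\<dots> \<le> Tm / 4"
  proof -
    have "Tm * x - x\<^sup>2 \<le> Tm * Tm / 4"
      using sum_squares_ge_zero[of "x - Tm / 2" 0] by (simp add: power2_eq_square algebra_simps)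
    then show ?thesis using assms by (simp add: divide_simps)
  qed
  finally show ?thesis
    using assms by (metis mult.assoc mult_left_mono times_divide_eq_right)
qed

lemma eventually_less_of_deriv_le_linear:
  fixes f :: "real \<Rightarrow> real" and K d t1 \<epsilon> :: real
  assumes "d > 0" "\<epsilon> > 0"
    and deriv: "\<And>t. t > t1 \<Longrightarrow> \<exists>D. (f has_real_derivative D) (at t) \<and> D \<le> K - d * f t"
  shows "\<forall>\<^sub>F t in at_top. f t < K / d + \<epsilon>"
proof -
  define t0 where "t0 = t1 + 1"
  define g where "g t = exp (d * t) * (f t - K / d)" for t
  have g_decreasing: "g t \<le> g t0" if "t \<ge> t0" for t
  proof (rule DERIV_nonpos_imp_nonincreasing[OF that])
    fix x assume "t0 \<le> x"
    then obtain D where D: "(f has_real_derivative D) (at x)" and D_le: "D \<le> K - d * f x"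
      using deriv[of x] unfolding t0_def by auto
    have "(g has_real_derivative exp (d * x) * (d * f x - K + D)) (at x)"
      unfolding g_def using \<open>d > 0\<close>
      by (auto intro!: derivative_eq_intros D simp: field_simps)
    moreover have "exp (d * x) * (d * f x - K + D) \<le> 0"
      using D_le by (intro mult_nonneg_nonpos) auto
    ultimately show "\<exists>y. (g has_real_derivative y) (at x) \<and> y \<le> 0" by blast
  qed
  have "((\<lambda>t. exp (- (d * t)) * g t0) \<longlongrightarrow> 0) at_top"
    using \<open>d > 0\<close> by real_asymp
  then have "\<forall>\<^sub>F t in at_top. exp (- (d * t)) * g t0 < \<epsilon>"
    using \<open>\<epsilon> > 0\<close> by (simp add: order_tendstoD(2))
  then show ?thesis
    using eventually_ge_at_top[of t0]
  proof eventually_elim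
    case (elim t)
    have "f t - K / d \<le> exp (- (d * t)) * g t0"
      using g_decreasing[OF elim(2)] unfolding g_def by (simp add: exp_minus field_simps mult.commute)
    with elim(1) show ?case by simp
  qed
qed

lemma positive_solution_delayed_total_dissipative:
  assumes sol: "positive_solution s d a Tmax b \<alpha> \<mu> p c \<tau> T I V"
    and "a > 0" "Tmax > 0" "d \<le> \<mu>" "\<tau> \<ge> 0" "t > \<tau>"
  shows "\<exists>D. ((\<lambda>t. T (t - \<tau>) + I t) has_real_derivative D) (at t)
           \<and> D \<le> s + a * Tmax / 2 - d * (T (t - \<tau>) + I t)"
proof -
  let ?inf = "b * T (t - \<tau>) * V (t - \<tau>) / (1 + \<alpha> * V (t - \<tau>))"
  have pos: "T x > 0" "I x > 0" if "x \<ge> - \<tau>" for x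
    using sol that unfolding positive_solution_def by auto
  have "(T has_real_derivative
          s - d * T (t - \<tau>) + a * T (t - \<tau>) * (1 - (T (t - \<tau>) + I (t - \<tau>)) / Tmax) - ?inf)
        (at (t + - \<tau>))"
    using sol \<open>t > \<tau>\<close> unfolding positive_solution_def by simp
  then have dT: "((\<lambda>x. T (x - \<tau>)) has_real_derivative
          s - d * T (t - \<tau>) + a * T (t - \<tau>) * (1 - (T (t - \<tau>) + I (t - \<tau>)) / Tmax) - ?inf) (at t)"
    using DERIV_shift[of T _ t "- \<tau>"] by simp
  have dI: "(I has_real_derivative ?inf + a * I t * (1 - (T t + I t) / Tmax) - \<mu> * I t) (at t)"
    using sol \<open>t > \<tau>\<close> \<open>\<tau> \<ge> 0\<close> unfolding positive_solution_def by simp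
  have "a * T (t - \<tau>) * (1 - (T (t - \<tau>) + I (t - \<tau>)) / Tmax) \<le> a * Tmax / 4"
    using logistic_growth_le pos[of "t - \<tau>"] assms by simp
  moreover have "a * I t * (1 - (T t + I t) / Tmax) \<le> a * Tmax / 4"
    using logistic_growth_le[of a Tmax "I t" "T t"] pos[of t] assms by (simp add: add.commute)
  moreover have "d * I t \<le> \<mu> * I t"
    using pos[of t] assms by (intro mult_right_mono) auto
  ultimately have "s - d * T (t - \<tau>) + a * T (t - \<tau>) * (1 - (T (t - \<tau>) + I (t - \<tau>)) / Tmax) - ?inf
      + (?inf + a * I t * (1 - (T t + I t) / Tmax) - \<mu> * I t)
      \<le> s + a * Tmax / 2 - d * (T (t - \<tau>) + I t)"
    unfolding distrib_left by linarith
  with DERIV_add[OF dT dI] show ?thesis by blast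
qed

lemma positive_solution_infected_eventually_bounded:
  assumes sol: "positive_solution s d a Tmax b \<alpha> \<mu> p c \<tau> T I V"
    and "d > 0" "a > 0" "Tmax > 0" "d \<le> \<mu>" "\<tau> \<ge> 0"
  shows "\<forall>\<^sub>F t in at_top. I t < (s + a * Tmax / 2) / d + 1"
proof -
  have "\<forall>\<^sub>F t in at_top. T (t - \<tau>) + I t < (s + a * Tmax / 2) / d + 1"
    using positive_solution_delayed_total_dissipative[OF sol] assms
    by (intro eventually_less_of_deriv_le_linear[of _ _ \<tau>]) auto
  then show ?thesis
    using eventually_ge_at_top[of 0]
  proof eventually_elim
    case (elim t)
    have "T (t - \<tau>) > 0"
      using sol elim(2) unfolding positive_solution_def by auto
    with elim(1) show ?case by simp
  qed
qed

lemma positive_solution_virus_eventually_bounded: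
  assumes sol: "positive_solution s d a Tmax b \<alpha> \<mu> p c \<tau> T I V"
    and "p > 0" "c > 0" and I_bounded: "\<forall>\<^sub>F t in at_top. I t < MI"
  shows "\<forall>\<^sub>F t in at_top. V t < p * MI / c + 1"
proof -
  obtain t2 where t2: "\<And>t. t \<ge> t2 \<Longrightarrow> I t < MI"
    using I_bounded unfolding eventually_at_top_linorder by blast
  have "\<exists>D. (V has_real_derivative D) (at t) \<and> D \<le> p * MI - c * V t" if "t > max t2 0" for t
  proof (intro exI conjI)
    show "(V has_real_derivative p * I t - c * V t) (at t)"
      using sol that unfolding positive_solution_def by simp
    show "p * I t - c * V t \<le> p * MI - c * V t"
      using t2[of t] that \<open>p > 0\<close> by simp
  qed
  then show ?thesis
    using \<open>c > 0\<close> by (intro eventually_less_of_deriv_le_linear[of _ _ "max t2 0"]) auto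
qed

theorem theorem6:
  fixes s d a Tmax b \<alpha> \<mu> p c \<tau> :: real
  assumes "s > 0" "d > 0" "a > 0" "Tmax > 0" "b > 0" "\<alpha> > 0" "\<mu> > 0" "p > 0" "c > 0"
    and "d \<le> \<mu>" and "\<tau> \<ge> 0"
  shows "\<exists>MI MV. MI > 0 \<and> MV > 0 \<and>
           (\<forall>T I V. positive_solution s d a Tmax b \<alpha> \<mu> p c \<tau> T I V \<longrightarrow>
              (\<forall>\<^sub>F t in at_top. I t < MI \<and> V t < MV))"
proof (intro exI conjI allI impI)
  define MI where "MI = (s + a * Tmax / 2) / d + 1"
  show "MI > 0"
    unfolding MI_def using assms by (simp add: add_pos_pos)
  then show "p * MI / c + 1 > 0"
    using assms by (simp add: add_pos_pos)
  fix T I V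
  assume sol: "positive_solution s d a Tmax b \<alpha> \<mu> p c \<tau> T I V"
  have "\<forall>\<^sub>F t in at_top. I t < MI"
    unfolding MI_def using positive_solution_infected_eventually_bounded[OF sol] assms by simp
  moreover have "\<forall>\<^sub>F t in at_top. V t < p * MI / c + 1"
    using positive_solution_virus_eventually_bounded[OF sol] calculation assms by simp
  ultimately show "\<forall>\<^sub>F t in at_top. I t < MI \<and> V t < p * MI / c + 1"
    by eventually_elim simp
qed

end
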